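(* Let $\mathcal H$ be a complex pre-Hilbert space, let $M\in\mathbb N$, and for $j=1,\ldots,M$ let $a_j,b_j:\mathcal H\to\mathcal H$ be linear operators that possess adjoints $a_j^*,b_j^*:\mathcal H\to\mathcal H$ (i.e. $(a_j\varphi,\psi)=(\varphi,a_j^*\psi)$ and $(b_j\varphi,\psi)=(\varphi,b_j^*\psi)$ for all $\varphi,\psi\in\mathcal H$). Then, in the sense of quadratic forms on $\mathcal H$, \[ \pm\sum_{j,k=1}^M a_j^*b_k^*b_ja_k\;\leq\;\sum_{j,k=1}^M a_j^*b_k^*b_ka_j , \] that is, for every $\varphi\in\mathcal H$ and each choice of sign, $\pm\big(\varphi,\sum_{j,k} a_j^*b_k^*b_ja_k\varphi\big)\le \big(\varphi,\sum_{j,k} a_j^*b_k^*b_ka_j\varphi\big)$ (both sides being real).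
   Context: For operators $S,T$ on $\mathcal H$, $S\le T$ means $(\varphi,S\varphi)\le(\varphi,T\varphi)$ for all $\varphi\in\mathcal H$. *)

theory Defs
  imports "HOL-Analysis.Analysis"
begin

text \<open>A complex pre-Hilbert space is modelled as a type 'a with an abelian group
structure, a complex scalar multiplication sc making it a complex vector space,
and an inner product ip which is linear in the second and conjugate-linear in
the first argument, Hermitian, and positive definite (no completeness assumed).\<close>

definition complex_pre_hilbert ::
  "(complex \<Rightarrow> 'a::ab_group_add \<Rightarrow> 'a) \<Rightarrow> ('a \<Rightarrow> 'a \<Rightarrow> complex) \<Rightarrow> bool" where
  "complex_pre_hilbert sc ip \<longleftrightarrow>
     vector_space sc \<and>
     (\<forall>x y z. ip x (y + z) = ip x y + ip x z) \<and>
     (\<forall>c x y. ip x (sc c y) = c * ip x y) \<and>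
     (\<forall>x y. ip y x = cnj (ip x y)) \<and>
     (\<forall>x. Im (ip x x) = 0 \<and> Re (ip x x) \<ge> 0) \<and>
     (\<forall>x. ip x x = 0 \<longrightarrow> x = 0)"

definition is_adjoint :: "('a \<Rightarrow> 'a \<Rightarrow> complex) \<Rightarrow> ('a \<Rightarrow> 'a) \<Rightarrow> ('a \<Rightarrow> 'a) \<Rightarrow> bool" where
  "is_adjoint ip a as \<longleftrightarrow> (\<forall>\<phi> \<psi>. ip (a \<phi>) \<psi> = ip \<phi> (as \<psi>))"

end

theory Submission
  imports Defs
begin

text \<open>Put \<open>x\<^sub>j\<^sub>k = b\<^sub>j a\<^sub>k \<phi>\<close>. Moving the adjoints across the inner product, the left form
  becomes \<open>\<Sum>\<^sub>j\<^sub>,\<^sub>k (x\<^sub>k\<^sub>j, x\<^sub>j\<^sub>k)\<close> and the right form \<open>\<Sum>\<^sub>j\<^sub>,\<^sub>k \<parallel>x\<^sub>j\<^sub>k\<parallel>\<^sup>2\<close>. The first sum is invariant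
  under conjugation (conjugating swaps the roles of \<open>j\<close> and \<open>k\<close>), hence real, and the
  pointwise bound \<open>2 \<bar>Re (u, v)\<bar> \<le> \<parallel>u\<parallel>\<^sup>2 + \<parallel>v\<parallel>\<^sup>2\<close>, obtained by expanding \<open>\<parallel>u \<plusminus> v\<parallel>\<^sup>2 \<ge> 0\<close>,
  summed over all pairs gives the claim.\<close>

context
  fixes sc :: "complex \<Rightarrow> 'a::ab_group_add \<Rightarrow> 'a" and ip :: "'a \<Rightarrow> 'a \<Rightarrow> complex"
  assumes H: "complex_pre_hilbert sc ip"
begin

lemma ip_add_right: "ip x (y + z) = ip x y + ip x z"
  using H unfolding complex_pre_hilbert_def by blast

lemma ip_cnj_commute: "ip y x = cnj (ip x y)"
  using H unfolding complex_pre_hilbert_def by blast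

lemma ip_self_real: "ip x x \<in> \<real>"
  using H unfolding complex_pre_hilbert_def complex_is_Real_iff by blast

lemma ip_self_nonneg: "0 \<le> Re (ip x x)"
  using H unfolding complex_pre_hilbert_def by blast

lemma ip_zero_right: "ip x 0 = 0"
  using ip_add_right[of x 0 0] by simp

lemma ip_sum_right: "finite S \<Longrightarrow> ip x (\<Sum>s\<in>S. u s) = (\<Sum>s\<in>S. ip x (u s))"
  by (induction S rule: finite_induct) (simp_all add: ip_zero_right ip_add_right)

lemma ip_add_left: "ip (y + z) x = ip y x + ip z x"
  by (simp add: ip_cnj_commute[of _ x] ip_add_right)

lemma ip_minus_right: "ip x (- y) = - ip x y"
  using ip_add_right[of x y "- y"] by (simp add: ip_zero_right add_eq_0_iff)

lemma ip_minus_left: "ip (- y) x = - ip y x"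
  by (simp add: ip_cnj_commute[of _ x] ip_minus_right)

lemma Re_ip_commute: "Re (ip v u) = Re (ip u v)"
  using ip_cnj_commute[of v u] by simp

lemma abs_Re_ip_le: "2 * \<bar>Re (ip u v)\<bar> \<le> Re (ip u u) + Re (ip v v)"
proof -
  have "ip (u + v) (u + v) = ip u u + ip v v + ip u v + ip v u"
    by (simp add: ip_add_left ip_add_right)
  with ip_self_nonneg[of "u + v"]
  have "0 \<le> Re (ip u u) + Re (ip v v) + 2 * Re (ip u v)"
    by (simp add: Re_ip_commute)
  moreover have "ip (u + - v) (u + - v) = ip u u + ip v v - ip u v - ip v u"
    unfolding ip_add_left ip_add_right ip_minus_left ip_minus_right by simp
  with ip_self_nonneg[of "u + - v"]
  have "0 \<le> Re (ip u u) + Re (ip v v) - 2 * Re (ip u v)"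
    by (simp add: Re_ip_commute del: add_uminus_conv_diff)
  ultimately show ?thesis
    by linarith
qed

lemma transposed_ip_sum_real: "(\<Sum>j\<in>I. \<Sum>k\<in>I. ip (x k j) (x j k)) \<in> \<real>"
proof -
  have "cnj (\<Sum>j\<in>I. \<Sum>k\<in>I. ip (x k j) (x j k)) = (\<Sum>j\<in>I. \<Sum>k\<in>I. ip (x j k) (x k j))"
    unfolding cnj_sum by (intro sum.cong refl) (metis ip_cnj_commute)
  also have "\<dots> = (\<Sum>j\<in>I. \<Sum>k\<in>I. ip (x k j) (x j k))"
    by (rule sum.swap[of "\<lambda>j k. ip (x j k) (x k j)"])
  finally show ?thesis
    using Reals_cnj_iff by blast
qed

lemma abs_Re_transposed_ip_sum_le:
  "\<bar>Re (\<Sum>j\<in>I. \<Sum>k\<in>I. ip (x k j) (x j k))\<bar> \<le> Re (\<Sum>j\<in>I. \<Sum>k\<in>I. ip (x j k) (x j k))"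
proof -
  let ?N = "\<lambda>j k. Re (ip (x j k) (x j k))"
  have "\<bar>Re (\<Sum>j\<in>I. \<Sum>k\<in>I. ip (x k j) (x j k))\<bar> \<le> (\<Sum>j\<in>I. \<Sum>k\<in>I. \<bar>Re (ip (x k j) (x j k))\<bar>)"
    unfolding Re_sum by (intro order.trans[OF sum_abs] sum_mono sum_abs)
  then have "2 * \<bar>Re (\<Sum>j\<in>I. \<Sum>k\<in>I. ip (x k j) (x j k))\<bar>
      \<le> (\<Sum>j\<in>I. \<Sum>k\<in>I. 2 * \<bar>Re (ip (x k j) (x j k))\<bar>)"
    by (simp flip: sum_distrib_left)
  also have "\<dots> \<le> (\<Sum>j\<in>I. \<Sum>k\<in>I. ?N k j + ?N j k)"
    by (intro sum_mono abs_Re_ip_le)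
  also have "\<dots> = (\<Sum>k\<in>I. \<Sum>j\<in>I. ?N k j) + (\<Sum>j\<in>I. \<Sum>k\<in>I. ?N j k)"
    by (simp only: sum.distrib sum.swap[of "\<lambda>j k. ?N k j"])
  also have "\<dots> = 2 * Re (\<Sum>j\<in>I. \<Sum>k\<in>I. ip (x j k) (x j k))"
    by (simp add: Re_sum)
  finally show ?thesis
    by simp
qed

end

theorem lemma3p2:
  fixes sc :: "complex \<Rightarrow> 'a::ab_group_add \<Rightarrow> 'a"
    and ip :: "'a \<Rightarrow> 'a \<Rightarrow> complex"
    and M :: nat
    and a b as bs :: "nat \<Rightarrow> 'a \<Rightarrow> 'a"
  assumes H: "complex_pre_hilbert sc ip"
    and lin_a: "\<And>j. j \<in> {1..M} \<Longrightarrow> Vector_Spaces.linear sc sc (a j)"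
    and lin_b: "\<And>j. j \<in> {1..M} \<Longrightarrow> Vector_Spaces.linear sc sc (b j)"
    and adj_a: "\<And>j. j \<in> {1..M} \<Longrightarrow> is_adjoint ip (a j) (as j)"
    and adj_b: "\<And>j. j \<in> {1..M} \<Longrightarrow> is_adjoint ip (b j) (bs j)"
  shows "\<forall>\<phi>.
    (let L = ip \<phi> (\<Sum>j\<in>{1..M}. \<Sum>k\<in>{1..M}. as j (bs k (b j (a k \<phi>))));
         R = ip \<phi> (\<Sum>j\<in>{1..M}. \<Sum>k\<in>{1..M}. as j (bs k (b k (a j \<phi>))))
     in L \<in> \<real> \<and> R \<in> \<real> \<and> Re L \<le> Re R \<and> - Re L \<le> Re R)"
proof
  fix \<phi>
  define x where "x j k = b j (a k \<phi>)" for j k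
  have move_adjoints: "ip \<phi> (as j (bs k y)) = ip (x k j) y" if "j \<in> {1..M}" "k \<in> {1..M}" for j k y
    using adj_a[OF that(1)] adj_b[OF that(2)] unfolding is_adjoint_def x_def by simp
  have L: "ip \<phi> (\<Sum>j\<in>{1..M}. \<Sum>k\<in>{1..M}. as j (bs k (b j (a k \<phi>))))
      = (\<Sum>j\<in>{1..M}. \<Sum>k\<in>{1..M}. ip (x k j) (x j k))"
    by (simp add: ip_sum_right[OF H] move_adjoints x_def)
  have "ip \<phi> (\<Sum>j\<in>{1..M}. \<Sum>k\<in>{1..M}. as j (bs k (b k (a j \<phi>))))
      = (\<Sum>j\<in>{1..M}. \<Sum>k\<in>{1..M}. ip (x k j) (x k j))"
    by (simp add: ip_sum_right[OF H] move_adjoints x_def)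
  also have "\<dots> = (\<Sum>k\<in>{1..M}. \<Sum>j\<in>{1..M}. ip (x k j) (x k j))"
    by (rule sum.swap)
  finally have R: "ip \<phi> (\<Sum>j\<in>{1..M}. \<Sum>k\<in>{1..M}. as j (bs k (b k (a j \<phi>))))
      = (\<Sum>j\<in>{1..M}. \<Sum>k\<in>{1..M}. ip (x j k) (x j k))" .
  have R_real: "(\<Sum>j\<in>{1..M}. \<Sum>k\<in>{1..M}. ip (x j k) (x j k)) \<in> \<real>"
    by (intro sum_in_Reals ip_self_real[OF H])
  show "let L = ip \<phi> (\<Sum>j\<in>{1..M}. \<Sum>k\<in>{1..M}. as j (bs k (b j (a k \<phi>))));
         R = ip \<phi> (\<Sum>j\<in>{1..M}. \<Sum>k\<in>{1..M}. as j (bs k (b k (a j \<phi>))))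
     in L \<in> \<real> \<and> R \<in> \<real> \<and> Re L \<le> Re R \<and> - Re L \<le> Re R"
    unfolding L R Let_def
    using transposed_ip_sum_real[OF H, of x "{1..M}"] R_real
      abs_Re_transposed_ip_sum_le[OF H, of x "{1..M}"]
    by (simp only: abs_le_iff)
qed

end
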